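(* Let $(\Omega,\mathcal{F})$ be a measurable space and $T:\Omega\to\Omega$ a measurable map. Let $\mathbb{V}(A)=\sup_{P\in\Theta}P(A)$, $A\in\mathcal{F}$, be an upper probability, where $\Theta=\{P \text{ probability on }(\Omega,\mathcal{F}) : P(A)\le \mathbb{V}(A)\ \forall A\in\mathcal{F}\}$. Assume $\mathbb{V}$ is continuous (from above), $T$-invariant, and $T$-ergodic. Let $\Theta_0$ be the set of $T$-invariant probabilities in $\Theta$. Then for every $A\in\mathcal{I}$ with $\mathbb{V}(A)>0$ there exists $P'\in\Theta_0$ with $P'(A)=1$.
   Context: $\mathcal{I}=\{A\in\mathcal{F}: T^{-1}A=A\}$ is the $T$-invariant $\sigma$-algebra. $\mathbb{V}$ is continuous if $\mathbb{V}(A_n)\to 0$ whenever $A_n\in\mathcal{F}$, $A_n\downarrow\emptyset$. $\mathbb{V}$ is $T$-invariant if $\mathbb{V}(T^{-1}A)=\mathbb{V}(A)$ for all $A\in\mathcal{F}$. A continuous upper probability $\mathbb{V}$ is $T$-ergodic if $\mathbb{V}(A)\in\{0,1\}$ for every $A\in\mathcal{I}$. A probability $P$ is $T$-invariant if $P(T^{-1}A)=P(A)$ for all $A\in\mathcal{F}$. *)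

theory Defs
  imports "HOL-Probability.Probability"
begin

text \<open>The measurable space (Omega, F) is represented by a measure M (only space M and sets M
are used). Probabilities on (Omega, F) are measures P with prob_space P and sets P = sets M.\<close>

definition probs_on :: "'a measure \<Rightarrow> 'a measure set" where
  "probs_on M = {P. prob_space P \<and> sets P = sets M}"

definition Theta :: "'a measure \<Rightarrow> ('a set \<Rightarrow> real) \<Rightarrow> 'a measure set" where
  "Theta M V = {P \<in> probs_on M. \<forall>A\<in>sets M. measure P A \<le> V A}"

definition upper_probability :: "'a measure \<Rightarrow> ('a set \<Rightarrow> real) \<Rightarrow> bool" where
  "upper_probability M V \<longleftrightarrow> Theta M V \<noteq> {} \<and>
     (\<forall>A\<in>sets M. V A = (SUP P\<in>Theta M V. measure P A))"

definition continuous_cap :: "'a measure \<Rightarrow> ('a set \<Rightarrow> real) \<Rightarrow> bool" where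
  "continuous_cap M V \<longleftrightarrow>
     (\<forall>An :: nat \<Rightarrow> 'a set. (\<forall>n. An n \<in> sets M) \<longrightarrow> decseq An \<longrightarrow> (\<Inter>n. An n) = {}
        \<longrightarrow> (\<lambda>n. V (An n)) \<longlonglongrightarrow> 0)"

definition invariant_sets :: "'a measure \<Rightarrow> ('a \<Rightarrow> 'a) \<Rightarrow> 'a set set" where
  "invariant_sets M T = {A \<in> sets M. T -` A \<inter> space M = A}"

definition T_invariant_cap :: "'a measure \<Rightarrow> ('a \<Rightarrow> 'a) \<Rightarrow> ('a set \<Rightarrow> real) \<Rightarrow> bool" where
  "T_invariant_cap M T V \<longleftrightarrow> (\<forall>A\<in>sets M. V (T -` A \<inter> space M) = V A)"

definition T_ergodic_cap :: "'a measure \<Rightarrow> ('a \<Rightarrow> 'a) \<Rightarrow> ('a set \<Rightarrow> real) \<Rightarrow> bool" where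
  "T_ergodic_cap M T V \<longleftrightarrow> continuous_cap M V \<and>
     (\<forall>A\<in>invariant_sets M T. V A = 0 \<or> V A = 1)"

definition T_invariant_prob :: "'a measure \<Rightarrow> ('a \<Rightarrow> 'a) \<Rightarrow> 'a measure \<Rightarrow> bool" where
  "T_invariant_prob M T P \<longleftrightarrow> (\<forall>A\<in>sets M. measure P (T -` A \<inter> space M) = measure P A)"

definition Theta0 :: "'a measure \<Rightarrow> ('a \<Rightarrow> 'a) \<Rightarrow> ('a set \<Rightarrow> real) \<Rightarrow> 'a measure set" where
  "Theta0 M T V = {P \<in> Theta M V. T_invariant_prob M T P}"

end

theory Submission
  imports Defs
begin

text \<open>Ergodicity forces V(A) = 1, so there are P_n in Theta with P_n(A) tending to 1.
The Cesaro averages (1/(n+1)) \<Sum>k\<le>n. P_n(T^-k B) are finitely additive, dominated by V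
(since V is T-invariant), give A the mass P_n(A), and are T-invariant up to an error 1/(n+1).
By Tychonoff they have a cluster point in the product [0,1]^F; it is a T-invariant finitely
additive probability below V with mass 1 on A, and domination by the continuous V makes it
countably additive.\<close>

lemma cluster_point_le:
  fixes g h :: "'b::topological_space \<Rightarrow> 'c::linorder_topology"
  assumes "inf (nhds x) (filtermap Q F) \<noteq> bot"
    and "continuous_on UNIV g" and "continuous_on UNIV h"
    and "eventually (\<lambda>n. g (Q n) \<le> h (Q n)) F"
  shows "g x \<le> h x"
proof (rule tendsto_le[OF assms(1)])
  show "(g \<longlongrightarrow> g x) (inf (nhds x) (filtermap Q F))"
    and "(h \<longlongrightarrow> h x) (inf (nhds x) (filtermap Q F))"
    using assms(2,3)
    by (auto simp: continuous_on_def tendsto_at_iff_tendsto_nhds intro: tendsto_mono[OF inf_le1])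
  show "eventually (\<lambda>y. g y \<le> h y) (inf (nhds x) (filtermap Q F))"
    using assms(4) by (intro filter_leD[OF inf_le2]) (simp add: eventually_filtermap)
qed

lemma cluster_point_tendsto:
  fixes g :: "'b::topological_space \<Rightarrow> 'c::t2_space"
  assumes "inf (nhds x) (filtermap Q F) \<noteq> bot"
    and "continuous_on UNIV g" and "((\<lambda>n. g (Q n)) \<longlongrightarrow> l) F"
  shows "g x = l"
proof (rule tendsto_unique[OF assms(1)])
  show "(g \<longlongrightarrow> g x) (inf (nhds x) (filtermap Q F))"
    using assms(2)
    by (auto simp: continuous_on_def tendsto_at_iff_tendsto_nhds intro: tendsto_mono[OF inf_le1])
  show "(g \<longlongrightarrow> l) (inf (nhds x) (filtermap Q F))"
    using assms(3)
    by (intro tendsto_mono[OF inf_le2]) (simp add: tendsto_compose_filtermap[symmetric] comp_def)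
qed

lemma pointwise_bounded_sequence_has_cluster_point:
  fixes Q :: "nat \<Rightarrow> 'b \<Rightarrow> real"
  assumes "compact K" and "\<And>n b. Q n b \<in> K"
  obtains x where "inf (nhds x) (filtermap Q sequentially) \<noteq> bot"
proof -
  have "compactin (product_topology (\<lambda>_. euclidean) UNIV) (PiE UNIV (\<lambda>_::'b. K))"
    using assms(1) by (simp add: compactin_PiE)
  then have "compact (PiE UNIV (\<lambda>_::'b. K))"
    by (simp add: euclidean_product_topology)
  moreover have "eventually (\<lambda>f. f \<in> PiE UNIV (\<lambda>_. K)) (filtermap Q sequentially)"
    using assms(2) by (simp add: eventually_filtermap PiE_UNIV_domain)
  moreover have "filtermap Q sequentially \<noteq> bot"
    by (simp add: filtermap_bot_iff)
  ultimately show ?thesis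
    using that unfolding compact_filter by blast
qed

lemma funpow_vimage_Suc:
  assumes "T \<in> measurable M M"
  shows "(T ^^ k) -` (T -` B \<inter> space M) \<inter> space M = (T ^^ Suc k) -` B \<inter> space M"
  using measurable_space[OF measurable_compose_n[OF assms]] by (auto simp: funpow_swap1)

lemma funpow_vimage_sets:
  "T \<in> measurable M M \<Longrightarrow> B \<in> sets M \<Longrightarrow> (T ^^ k) -` B \<inter> space M \<in> sets M"
  by (rule measurable_sets[OF measurable_compose_n])

lemma funpow_vimage_invariant_set:
  assumes "T \<in> measurable M M" and "A \<in> invariant_sets M T"
  shows "(T ^^ k) -` A \<inter> space M = A"
proof (induction k)
  case 0
  then show ?case using assms(2) sets.sets_into_space by (auto simp: invariant_sets_def)
next
  case (Suc k)
  have "(T ^^ Suc k) -` A \<inter> space M = (T ^^ k) -` (T -` A \<inter> space M) \<inter> space M"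
    using funpow_vimage_Suc[OF assms(1)] by blast
  also have "\<dots> = A"
    using Suc assms(2) by (simp add: invariant_sets_def)
  finally show ?case .
qed

lemma T_invariant_cap_funpow:
  assumes "T \<in> measurable M M" and "T_invariant_cap M T V" and "B \<in> sets M"
  shows "V ((T ^^ k) -` B \<inter> space M) = V B"
  using assms(3)
proof (induction k arbitrary: B)
  case (Suc k)
  have "V ((T ^^ Suc k) -` B \<inter> space M) = V ((T ^^ k) -` (T -` B \<inter> space M) \<inter> space M)"
    using funpow_vimage_Suc[OF assms(1)] by metis
  also have "\<dots> = V (T -` B \<inter> space M)"
    using Suc.IH measurable_sets[OF assms(1) Suc.prems] .
  also have "\<dots> = V B"
    using assms(2) Suc.prems by (simp add: T_invariant_cap_def)
  finally show ?case .
qed simp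

definition cesaro_pushforward ::
    "'a measure \<Rightarrow> ('a \<Rightarrow> 'a) \<Rightarrow> 'a measure \<Rightarrow> nat \<Rightarrow> 'a set \<Rightarrow> real"
  where "cesaro_pushforward M T P n B =
    (\<Sum>k\<le>n. measure P ((T ^^ k) -` B \<inter> space M)) / real (Suc n)"

lemma cesaro_pushforward_bounds:
  assumes "prob_space P"
  shows "cesaro_pushforward M T P n B \<in> {0..1}"
proof -
  have "(\<Sum>k\<le>n. measure P ((T ^^ k) -` B \<inter> space M)) \<le> (\<Sum>k\<le>n. 1)"
    by (intro sum_mono) (simp add: prob_space.prob_le_1[OF assms])
  then show ?thesis
    by (auto simp: cesaro_pushforward_def sum_nonneg)
qed

lemma cesaro_pushforward_space:
  assumes "prob_space P" and "sets P = sets M" and "T \<in> measurable M M"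
  shows "cesaro_pushforward M T P n (space M) = 1"
proof -
  have "(T ^^ k) -` space M \<inter> space M = space P" for k
    using measurable_space[OF measurable_compose_n[OF assms(3)]] sets_eq_imp_space_eq[OF assms(2)]
    by auto
  then show ?thesis
    by (simp add: cesaro_pushforward_def prob_space.prob_space[OF assms(1)])
qed

lemma cesaro_pushforward_Un:
  assumes "prob_space P" and "sets P = sets M" and "T \<in> measurable M M"
    and "B \<in> sets M" and "C \<in> sets M" and "B \<inter> C = {}"
  shows "cesaro_pushforward M T P n (B \<union> C) =
    cesaro_pushforward M T P n B + cesaro_pushforward M T P n C"
proof -
  have "measure P ((T ^^ k) -` (B \<union> C) \<inter> space M) =
      measure P ((T ^^ k) -` B \<inter> space M) + measure P ((T ^^ k) -` C \<inter> space M)" for k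
  proof -
    interpret prob_space P by (rule assms(1))
    show ?thesis
      using assms(2-6) funpow_vimage_sets[OF assms(3)]
      by (subst finite_measure_Union[symmetric]) (auto simp: vimage_Un Int_Un_distrib2)
  qed
  then show ?thesis
    by (simp add: cesaro_pushforward_def sum.distrib add_divide_distrib)
qed

lemma cesaro_pushforward_le_cap:
  assumes "P \<in> Theta M V" and "T \<in> measurable M M" and "T_invariant_cap M T V" and "B \<in> sets M"
  shows "cesaro_pushforward M T P n B \<le> V B"
proof -
  have "(\<Sum>k\<le>n. measure P ((T ^^ k) -` B \<inter> space M)) \<le> (\<Sum>k\<le>n. V B)"
  proof (intro sum_mono)
    fix k
    have "measure P ((T ^^ k) -` B \<inter> space M) \<le> V ((T ^^ k) -` B \<inter> space M)"
      using assms(1,2,4) by (simp add: Theta_def funpow_vimage_sets)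
    then show "measure P ((T ^^ k) -` B \<inter> space M) \<le> V B"
      using T_invariant_cap_funpow[OF assms(2-4)] by simp
  qed
  then show ?thesis
    by (simp add: cesaro_pushforward_def divide_le_eq mult.commute)
qed

lemma cesaro_pushforward_invariant_set:
  "T \<in> measurable M M \<Longrightarrow> A \<in> invariant_sets M T \<Longrightarrow> cesaro_pushforward M T P n A = measure P A"
  by (simp add: cesaro_pushforward_def funpow_vimage_invariant_set)

lemma cesaro_pushforward_vimage:
  assumes "prob_space P" and "T \<in> measurable M M"
  shows "\<bar>cesaro_pushforward M T P n (T -` B \<inter> space M) - cesaro_pushforward M T P n B\<bar>
    \<le> 1 / real (Suc n)"
proof -
  define f where "f k = measure P ((T ^^ k) -` B \<inter> space M)" for k
  have "cesaro_pushforward M T P n (T -` B \<inter> space M) = (\<Sum>k\<le>n. f (Suc k)) / real (Suc n)"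
    unfolding cesaro_pushforward_def funpow_vimage_Suc[OF assms(2)] f_def ..
  then have "cesaro_pushforward M T P n (T -` B \<inter> space M) - cesaro_pushforward M T P n B
      = (\<Sum>k\<le>n. f (Suc k) - f k) / real (Suc n)"
    by (simp add: cesaro_pushforward_def f_def sum_subtractf diff_divide_distrib)
  also have "\<dots> = (f (Suc n) - f 0) / real (Suc n)"
    by (simp add: sum_Suc_diff atMost_atLeast0)
  finally have diff: "cesaro_pushforward M T P n (T -` B \<inter> space M) - cesaro_pushforward M T P n B
      = (f (Suc n) - f 0) / real (Suc n)" .
  have f_bounds: "0 \<le> f k \<and> f k \<le> 1" for k
    using prob_space.prob_le_1[OF assms(1)] by (simp add: f_def)
  have "\<bar>f (Suc n) - f 0\<bar> \<le> 1"
    using f_bounds[of 0] f_bounds[of "Suc n"] by (auto simp: abs_le_iff)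
  with diff show ?thesis
    by (simp add: abs_divide divide_right_mono)
qed

lemma upper_probability_approx:
  assumes "upper_probability M V" and "A \<in> sets M"
  obtains P where "\<And>n. P n \<in> Theta M V" and "(\<lambda>n. measure (P n) A) \<longlonglongrightarrow> V A"
proof -
  have Theta: "Theta M V \<noteq> {}" and V_SUP: "V A = (SUP P\<in>Theta M V. measure P A)"
    using assms by (auto simp: upper_probability_def)
  have le_V: "measure P A \<le> V A" if "P \<in> Theta M V" for P
    using that assms(2) by (simp add: Theta_def)
  have "\<exists>P\<in>Theta M V. V A - 1 / real (Suc n) < measure P A" for n
  proof -
    have "bdd_above ((\<lambda>P. measure P A) ` Theta M V)"
      using le_V by (intro bdd_aboveI[of _ "V A"]) auto
    moreover have "V A - 1 / real (Suc n) < (SUP P\<in>Theta M V. measure P A)"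
      using V_SUP by simp
    ultimately show ?thesis
      using less_cSUP_iff[OF Theta] by blast
  qed
  then obtain P where P: "\<And>n. P n \<in> Theta M V" "\<And>n. V A - 1 / real (Suc n) < measure (P n) A"
    by metis
  have lim: "(\<lambda>n. V A - 1 / real (Suc n)) \<longlonglongrightarrow> V A"
    using tendsto_diff[OF tendsto_const LIMSEQ_inverse_real_of_nat, of "V A"]
    by (simp add: inverse_eq_divide)
  have lower: "\<forall>n. V A - 1 / real (Suc n) \<le> measure (P n) A"
    and upper: "\<forall>n. measure (P n) A \<le> V A"
    using P le_V by (auto intro: less_imp_le)
  have "(\<lambda>n. measure (P n) A) \<longlonglongrightarrow> V A"
    using real_tendsto_sandwich[OF always_eventually[OF lower] always_eventually[OF upper] lim]
    by simp
  with P(1) show ?thesis by (rule that)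
qed

lemma prob_of_additive_below_continuous_cap:
  fixes \<mu> :: "'a set \<Rightarrow> real"
  assumes "continuous_cap M V"
    and nonneg: "\<And>B. B \<in> sets M \<Longrightarrow> 0 \<le> \<mu> B"
    and le_V: "\<And>B. B \<in> sets M \<Longrightarrow> \<mu> B \<le> V B"
    and space: "\<mu> (space M) = 1"
    and additive: "\<And>B C. B \<in> sets M \<Longrightarrow> C \<in> sets M \<Longrightarrow> B \<inter> C = {} \<Longrightarrow>
      \<mu> (B \<union> C) = \<mu> B + \<mu> C"
  obtains P where "P \<in> probs_on M" and "\<And>B. B \<in> sets M \<Longrightarrow> measure P B = \<mu> B"
proof -
  define P where "P = measure_of (space M) (sets M) (\<lambda>B. ennreal (\<mu> B))"
  have pos: "positive (sets M) (\<lambda>B. ennreal (\<mu> B))"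
    using additive[of "{}" "{}"] by (simp add: positive_def)
  have add: "additive (sets M) (\<lambda>B. ennreal (\<mu> B))"
    by (auto simp: additive_def additive nonneg)
  have ca: "countably_additive (sets M) (\<lambda>B. ennreal (\<mu> B))"
  proof (rule sets.empty_continuous_imp_countably_additive[OF pos add])
    fix B :: "nat \<Rightarrow> 'a set"
    assume "range B \<subseteq> sets M" and "decseq B" and "(\<Inter>i. B i) = {}"
    then have lim: "(\<lambda>n. V (B n)) \<longlonglongrightarrow> 0"
      using assms(1) unfolding continuous_cap_def by blast
    have lower: "\<forall>n. 0 \<le> \<mu> (B n)" and upper: "\<forall>n. \<mu> (B n) \<le> V (B n)"
      using \<open>range B \<subseteq> sets M\<close> nonneg le_V by auto
    have "(\<lambda>n. \<mu> (B n)) \<longlonglongrightarrow> 0"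
      using real_tendsto_sandwich[OF always_eventually[OF lower] always_eventually[OF upper]
          tendsto_const lim] .
    then show "(\<lambda>n. ennreal (\<mu> (B n))) \<longlonglongrightarrow> 0"
      using tendsto_ennrealI by fastforce
  qed simp
  have emeasure_P: "emeasure P B = ennreal (\<mu> B)" if "B \<in> sets M" for B
    unfolding P_def using emeasure_measure_of_sigma[OF sets.sigma_algebra_axioms pos ca that] .
  have sets_P: "sets P = sets M" and space_P: "space P = space M"
    by (simp_all add: P_def)
  have "prob_space P"
    by (rule prob_spaceI) (simp add: space_P emeasure_P space)
  then show ?thesis
    using sets_P emeasure_P nonneg by (intro that) (auto simp: probs_on_def measure_def)
qed

lemma invariant_additive_below_cap:
  assumes T: "T \<in> measurable M M" and "upper_probability M V" and "T_invariant_cap M T V"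
    and A: "A \<in> invariant_sets M T"
  obtains \<mu> :: "'a set \<Rightarrow> real"
  where "\<And>B. 0 \<le> \<mu> B" and "\<And>B. B \<in> sets M \<Longrightarrow> \<mu> B \<le> V B" and "\<mu> (space M) = 1"
    and "\<And>B C. B \<in> sets M \<Longrightarrow> C \<in> sets M \<Longrightarrow> B \<inter> C = {} \<Longrightarrow> \<mu> (B \<union> C) = \<mu> B + \<mu> C"
    and "\<And>B. \<mu> (T -` B \<inter> space M) = \<mu> B" and "\<mu> A = V A"
proof -
  have "A \<in> sets M"
    using A by (simp add: invariant_sets_def)
  then obtain P where P: "\<And>n. P n \<in> Theta M V"
    and lim_A: "(\<lambda>n. measure (P n) A) \<longlonglongrightarrow> V A"
    using assms(2) upper_probability_approx by blast
  have prob: "prob_space (P n)" and sets_P: "sets (P n) = sets M" for n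
    using P[of n] by (simp_all add: Theta_def probs_on_def)
  define Q where "Q n = cesaro_pushforward M T (P n) n" for n
  have bounds: "Q n B \<in> {0..1}" for n B
    unfolding Q_def by (rule cesaro_pushforward_bounds[OF prob])
  then obtain x where x: "inf (nhds x) (filtermap Q sequentially) \<noteq> bot"
    using pointwise_bounded_sequence_has_cluster_point[OF compact_Icc] by blast
  show ?thesis
  proof (rule that)
    show "0 \<le> x B" for B
      by (rule cluster_point_le[OF x, of "\<lambda>_. 0" "\<lambda>f. f B"])
        (use bounds in auto)
    show "x B \<le> V B" if "B \<in> sets M" for B
      by (rule cluster_point_le[OF x, of "\<lambda>f. f B" "\<lambda>_. V B"])
        (auto simp: Q_def cesaro_pushforward_le_cap[OF P T assms(3) that])
    show "x (space M) = 1"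
      by (rule cluster_point_tendsto[OF x, of "\<lambda>f. f (space M)"])
        (simp_all add: Q_def cesaro_pushforward_space[OF prob sets_P T])
    show "x (B \<union> C) = x B + x C" if "B \<in> sets M" "C \<in> sets M" "B \<inter> C = {}" for B C
      using cluster_point_tendsto[OF x, of "\<lambda>f. f (B \<union> C) - f B - f C" 0]
      by (simp add: Q_def cesaro_pushforward_Un[OF prob sets_P T that] continuous_intros)
    show "x (T -` B \<inter> space M) = x B" for B
    proof -
      have "(\<lambda>n. Q n (T -` B \<inter> space M) - Q n B) \<longlonglongrightarrow> 0"
        using cesaro_pushforward_vimage[OF prob T]
        by (intro Lim_null_comparison[OF always_eventually LIMSEQ_inverse_real_of_nat])
          (simp add: Q_def inverse_eq_divide)
      then show ?thesis
        using cluster_point_tendsto[OF x, of "\<lambda>f. f (T -` B \<inter> space M) - f B" 0]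
        by (simp add: continuous_intros)
    qed
    show "x A = V A"
      using cluster_point_tendsto[OF x, of "\<lambda>f. f A"] lim_A
      by (simp add: Q_def cesaro_pushforward_invariant_set[OF T A])
  qed
qed

theorem lemma3p1:
  fixes M :: "'a measure" and T :: "'a \<Rightarrow> 'a" and V :: "'a set \<Rightarrow> real"
  assumes "T \<in> measurable M M"
    and "upper_probability M V"
    and "continuous_cap M V"
    and "T_invariant_cap M T V"
    and "T_ergodic_cap M T V"
  shows "\<forall>A\<in>invariant_sets M T. V A > 0 \<longrightarrow> (\<exists>P'\<in>Theta0 M T V. measure P' A = 1)"
proof (intro ballI impI)
  fix A assume A: "A \<in> invariant_sets M T" and "V A > 0"
  then have "V A = 1"
    using assms(5) by (auto simp: T_ergodic_cap_def)
  obtain \<mu> where nonneg: "\<And>B. 0 \<le> \<mu> B" and le_V: "\<And>B. B \<in> sets M \<Longrightarrow> \<mu> B \<le> V B"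
    and space: "\<mu> (space M) = 1"
    and additive: "\<And>B C. B \<in> sets M \<Longrightarrow> C \<in> sets M \<Longrightarrow> B \<inter> C = {} \<Longrightarrow>
      \<mu> (B \<union> C) = \<mu> B + \<mu> C"
    and invariant: "\<And>B. \<mu> (T -` B \<inter> space M) = \<mu> B" and "\<mu> A = V A"
    using invariant_additive_below_cap[OF assms(1,2,4) A] by metis
  obtain P' where "P' \<in> probs_on M"
    and measure_P': "\<And>B. B \<in> sets M \<Longrightarrow> measure P' B = \<mu> B"
    using prob_of_additive_below_continuous_cap[OF assms(3) nonneg le_V space additive] by metis
  then have "P' \<in> Theta0 M T V"
    using le_V invariant measurable_sets[OF assms(1)]
    by (auto simp: Theta0_def Theta_def T_invariant_prob_def)
  moreover have "measure P' A = 1"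
    using A measure_P' \<open>\<mu> A = V A\<close> \<open>V A = 1\<close> by (simp add: invariant_sets_def)
  ultimately show "\<exists>P'\<in>Theta0 M T V. measure P' A = 1" ..
qed

end
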